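(* Let $0<\alpha<1$ and $1\le i\le k\le 6$. Let $\varphi_n=\sum_{m=0}^{n}\omega^{(k,i)}_m$ (so that $\omega^{(k,i)}(\xi)=(1-\xi)\varphi^{(k,i)}(\xi)$ as formal power series, with the weights $\omega^{(k,i)}_m$ defined in the context), let $g^{(1-\alpha)}_n=(-1)^n\binom{1-\alpha}{n}$ be the coefficients of $(1-\xi)^{1-\alpha}$, and let $\psi^{(k,i)}(\xi)=(1-\xi)^{1-\alpha}\varphi^{(k,i)}(\xi)=\sum_{n\ge0}\psi_n\xi^n$, i.e. $\psi_n=\sum_{m=0}^{n}g^{(1-\alpha)}_{n-m}\varphi_m$. Then $\sum_{n=0}^{\infty}|\psi_n|<\infty$.
   Context: Uniform grid $t_n=n\Delta t$, $\Delta t>0$, $I_j=[t_{j-1},t_j]$. For a function $u$ and integers $m\ge1$, $j$, $q$, let $p^{m}_{j,q}$ be the polynomial of degree at most $m$ interpolating $u$ at $t_{j+q-m-1},\dots,t_{j+q-1}$. For $1\le i\le k\le 6$ and $n\ge k$, let $P^{k}_{i,n}$ be the continuous piecewise polynomial on $[0,t_n]$ equal on $I_j$ to $p^{k-1}_{j,k-j}$ for $1\le j\le k-i$, to $p^{k}_{j,i}$ for $k-i+1\le j\le n-i+1$, and to $p^{k}_{j,n+1-j}$ for $n-i+2\le j\le n$, and set $D^{\alpha}_{k,i}u_n=\frac{1}{\Gamma(1-\alpha)}\int_0^{t_n}(t_n-\xi)^{-\alpha}(P^{k}_{i,n})'(\xi)\,\mathrm{d}\xi$. This is a linear combination of $u_0=u(t_0),\dots,u_n=u(t_n)$;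 for $k\le j\le n$ the coefficient of $u_j$ in $(\Delta t)^{\alpha}D^{\alpha}_{k,i}u_n$ depends only on $n-j$ and is denoted $\omega^{(k,i)}_{n-j}$; this defines $\omega^{(k,i)}_m$ for all $m\ge0$. For real $\beta$, $\binom{\beta}{n}=\beta(\beta-1)\cdots(\beta-n+1)/n!$. *)

theory Defs
  imports "HOL-Analysis.Analysis" "HOL-Computational_Algebra.Polynomial"
begin

text \<open>Grid with step 1 (the weights are independent of the step size), nodes t_l = l.
  interp v m a is the polynomial of degree at most m interpolating the nodal values v
  at the nodes a, a+1, ..., a+m (Lagrange form).\<close>
definition interp :: "(int \<Rightarrow> real) \<Rightarrow> nat \<Rightarrow> int \<Rightarrow> real poly" where
  "interp v m a = (\<Sum>r\<in>{0..m}. smult (v (a + int r))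
      (\<Prod>s\<in>{0..m}-{r}. smult (1 / (real r - real s)) [:- real_of_int (a + int s), 1:]))"

definition pjq :: "(int \<Rightarrow> real) \<Rightarrow> nat \<Rightarrow> int \<Rightarrow> int \<Rightarrow> real poly" where
  "pjq v m j q = interp v m (j + q - int m - 1)"

definition piece :: "nat \<Rightarrow> nat \<Rightarrow> nat \<Rightarrow> nat \<Rightarrow> (int \<Rightarrow> real) \<Rightarrow> real poly" where
  "piece k i n j v =
     (if int j \<le> int k - int i then pjq v (k - 1) (int j) (int k - int j)
      else if int j \<le> int n - int i + 1 then pjq v k (int j) (int i)
      else pjq v k (int j) (int n + 1 - int j))"

text \<open>(Delta t)^alpha D^alpha_{k,i} u_n with Delta t = 1 and nodal values v.\<close>
definition Dki :: "real \<Rightarrow> nat \<Rightarrow> nat \<Rightarrow> nat \<Rightarrow> (int \<Rightarrow> real) \<Rightarrow> real" where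
  "Dki \<alpha> k i n v = (1 / Gamma (1 - \<alpha>)) *
     (\<Sum>j=1..n. integral {real j - 1 .. real j}
        (\<lambda>\<xi>. (real n - \<xi>) powr (- \<alpha>) * poly (pderiv (piece k i n j v)) \<xi>))"

text \<open>omega^{(k,i)}_m: coefficient of u_j in (Delta t)^alpha D u_n, taken at j = k, n = k + m.\<close>
definition omega :: "real \<Rightarrow> nat \<Rightarrow> nat \<Rightarrow> nat \<Rightarrow> real" where
  "omega \<alpha> k i m = Dki \<alpha> k i (k + m) (\<lambda>l. if l = int k then 1 else 0)"

definition phi :: "real \<Rightarrow> nat \<Rightarrow> nat \<Rightarrow> nat \<Rightarrow> real" where
  "phi \<alpha> k i n = (\<Sum>m=0..n. omega \<alpha> k i m)"

definition gcoef :: "real \<Rightarrow> nat \<Rightarrow> real" where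
  "gcoef \<beta> n = (-1) ^ n * (\<beta> gchoose n)"

definition psi :: "real \<Rightarrow> nat \<Rightarrow> nat \<Rightarrow> nat \<Rightarrow> real" where
  "psi \<alpha> k i n = (\<Sum>m=0..n. gcoef (1 - \<alpha>) (n - m) * phi \<alpha> k i m)"

end

theory Submission
  imports Defs "HOL-Computational_Algebra.Formal_Power_Series" "HOL-Real_Asymp.Real_Asymp"
begin

text \<open>Summing the weights, \<phi>_N is the discrete operator at t_{k+N} applied to the nodal step
  u_j = [j \<ge> k]. Its interpolant is constant beyond t_{2k}, so only the cells of [0, t_{2k}]
  contribute, and expanding the kernel (t_{k+N} - \<xi>) powr -\<alpha> there to first order gives
  \<phi>_N = N powr -\<alpha> / \<Gamma>(1 - \<alpha>) + O(N powr (-\<alpha> - 1)), the constant being the jump 1 of the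
  step. The coefficients of (1 - \<xi>) powr (\<alpha> - 1) have the same expansion, by the O(1/n) rate
  of convergence of Gauss's limit formula for 1/\<Gamma>. Hence R = \<phi> - gcoef (\<alpha> - 1) is absolutely
  summable, and \<psi> = 1 + (1 - \<xi>) powr (1 - \<alpha>) R is a product of absolutely summable series,
  as the coefficients of (1 - \<xi>) powr (1 - \<alpha>) are O(n powr (\<alpha> - 2)).\<close>

section \<open>Lagrange interpolation\<close>

lemma poly_interp:
  "poly (interp v m a) x = (\<Sum>r\<in>{0..m}. v (a + int r) *
      (\<Prod>s\<in>{0..m}-{r}. (x - of_int (a + int s)) / (real r - real s)))"
  unfolding interp_def poly_sum poly_smult poly_prod
  by (intro sum.cong prod.cong refl) (simp_all add: field_simps)

lemma interp_cong:
  assumes "\<And>l. l \<in> {a..a + int m} \<Longrightarrow> v l = w l"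
  shows "interp v m a = interp w m a"
  unfolding interp_def using assms by (intro sum.cong) auto

lemma interp_sum:
  assumes "finite S"
  shows "interp (\<lambda>l. \<Sum>j\<in>S. w j l) m a = (\<Sum>j\<in>S. interp (w j) m a)"
  unfolding interp_def smult_sum by (rule sum.swap)

lemma poly_interp_node:
  assumes "l \<in> {a..a + int m}"
  shows "poly (interp v m a) (of_int l) = v l"
proof -
  define r where "r = nat (l - a)"
  have r: "r \<le> m" "l = a + int r"
    using assms unfolding r_def by auto
  have "poly (interp v m a) (of_int l) = (\<Sum>r'\<in>{0..m}. if r' = r then v l else 0)"
    unfolding poly_interp
  proof (intro sum.cong refl)
    fix r' assume "r' \<in> {0..m}"
    show "v (a + int r') * (\<Prod>s\<in>{0..m}-{r'}. (of_int l - of_int (a + int s)) / (real r' - real s))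
        = (if r' = r then v l else 0)"
    proof (cases "r' = r")
      case True
      then show ?thesis using r by (simp add: prod.neutral)
    next
      case False
      then have "(\<Prod>s\<in>{0..m}-{r'}. (of_int l - of_int (a + int s)) / (real r' - real s)) = 0"
        using r by (subst prod_zero_iff) auto
      then show ?thesis using False by simp
    qed
  qed
  also have "\<dots> = v l" using r by simp
  finally show ?thesis .
qed

lemma degree_interp: "degree (interp v m a) \<le> m"
  unfolding interp_def
proof (intro degree_sum_le)
  fix r assume r: "r \<in> {0..m}"
  let ?factor = "\<lambda>s. smult (1 / (real r - real s)) [:- of_int (a + int s), 1:]"
  have "degree (prod ?factor ({0..m}-{r})) \<le> sum (degree \<circ> ?factor) ({0..m}-{r})"
    by (rule degree_prod_sum_le) auto
  also have "\<dots> \<le> sum (\<lambda>_. 1) ({0..m}-{r})"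
    by (intro sum_mono) (simp add: degree_smult_le)
  also have "\<dots> = m" using r by simp
  finally show "degree (smult (v (a + int r)) (prod ?factor ({0..m}-{r}))) \<le> m"
    by (meson degree_smult_le order_trans)
qed simp

lemma interp_const:
  assumes "\<And>l. l \<in> {a..a + int m} \<Longrightarrow> v l = c"
  shows "interp v m a = [:c:]"
proof (rule ccontr)
  let ?p = "interp v m a - [:c:]"
  assume "interp v m a \<noteq> [:c:]"
  then have p0: "?p \<noteq> 0" by simp
  have "of_int ` {a..a + int m} \<subseteq> {x. poly ?p x = 0}"
    using assms poly_interp_node by auto
  then have "card (of_int ` {a..a + int m} :: real set) \<le> card {x. poly ?p x = 0}"
    using poly_roots_finite[OF p0] by (intro card_mono) auto
  also have "\<dots> \<le> degree ?p"
    by (rule card_poly_roots_bound[OF p0])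
  also have "\<dots> \<le> m"
    using degree_interp[of v m a] by (intro degree_diff_le) auto
  finally show False
    by (subst (asm) card_image) (auto simp: inj_on_def)
qed

lemma interp_shift:
  "interp (\<lambda>l. v (l + s)) m a = pcompose (interp v m (a + s)) [:of_int s, 1:]"
  by (rule poly_eq_poly_eq_iff[THEN iffD1], rule ext)
     (simp add: poly_pcompose poly_interp algebra_simps)

definition piece_degree :: "nat \<Rightarrow> nat \<Rightarrow> nat \<Rightarrow> nat" where
  "piece_degree k i J = (if int J \<le> int k - int i then k - 1 else k)"

definition piece_start :: "nat \<Rightarrow> nat \<Rightarrow> nat \<Rightarrow> nat \<Rightarrow> int" where
  "piece_start k i n J =
     (if int J \<le> int k - int i then 0
      else if int J \<le> int n - int i + 1 then int J + int i - int k - 1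
      else int n - int k)"

definition piece_nodes :: "nat \<Rightarrow> nat \<Rightarrow> nat \<Rightarrow> nat \<Rightarrow> int set" where
  "piece_nodes k i n J = {piece_start k i n J .. piece_start k i n J + int (piece_degree k i J)}"

lemma piece_eq_interp:
  assumes "1 \<le> k"
  shows "piece k i n J v = interp v (piece_degree k i J) (piece_start k i n J)"
  using assms unfolding piece_def pjq_def piece_degree_def piece_start_def by simp

lemma piece_nodes_bounds:
  assumes "1 \<le> i" "i \<le> k" "J \<le> n" "l \<in> piece_nodes k i n J"
  shows "int J - int k \<le> l" "l \<le> max (int k - 1) (int J + int i - 1)" "l \<le> max (int k - 1) (int n)"
  using assms unfolding piece_nodes_def piece_start_def piece_degree_def
  by (auto split: if_splits)

lemma piece_nodes_cell_ends:
  assumes "1 \<le> i" "i \<le> k" "1 \<le> J" "J \<le> n"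
  shows "int J - 1 \<in> piece_nodes k i n J" "int J \<in> piece_nodes k i n J"
  using assms unfolding piece_nodes_def piece_start_def piece_degree_def
  by (auto split: if_splits)

lemma piece_cong:
  assumes "1 \<le> k" "\<And>l. l \<in> piece_nodes k i n J \<Longrightarrow> v l = w l"
  shows "piece k i n J v = piece k i n J w"
  unfolding piece_eq_interp[OF assms(1)] using assms(2)
  by (intro interp_cong) (simp add: piece_nodes_def)

lemma piece_const:
  assumes "1 \<le> k" "\<And>l. l \<in> piece_nodes k i n J \<Longrightarrow> v l = c"
  shows "piece k i n J v = [:c:]"
  unfolding piece_eq_interp[OF assms(1)] using assms(2)
  by (intro interp_const) (simp add: piece_nodes_def)

lemma poly_piece_node:
  assumes "1 \<le> k" "l \<in> piece_nodes k i n J"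
  shows "poly (piece k i n J v) (of_int l) = v l"
  unfolding piece_eq_interp[OF assms(1)] using assms(2)
  by (intro poly_interp_node) (simp add: piece_nodes_def)

lemma piece_sum:
  assumes "1 \<le> k" "finite S"
  shows "piece k i n J (\<lambda>l. \<Sum>j\<in>S. w j l) = (\<Sum>j\<in>S. piece k i n J (w j))"
  unfolding piece_eq_interp[OF assms(1)] using interp_sum[OF assms(2)] .

lemma piece_shift:
  assumes "1 \<le> k" "int k - int i < int J"
  shows "piece k i (n + s) (J + s) v = pcompose (piece k i n J (\<lambda>l. v (l + int s))) [:- real s, 1:]"
proof -
  have "piece_start k i (n + s) (J + s) = piece_start k i n J + int s"
    "piece_degree k i (J + s) = piece_degree k i J"
    using assms(2) unfolding piece_start_def piece_degree_def by auto
  then show ?thesis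
    unfolding piece_eq_interp[OF assms(1)] interp_shift pcompose_assoc[symmetric]
    by (simp add: pcompose_pCons)
qed

section \<open>Structure of the discrete operator\<close>

lemma kernel_has_integral:
  fixes a b x \<alpha> :: real
  assumes "\<alpha> < 1" "a \<le> b" "b \<le> x"
  shows "((\<lambda>\<xi>. (x - \<xi>) powr (-\<alpha>)) has_integral
           ((x - a) powr (1 - \<alpha>) - (x - b) powr (1 - \<alpha>)) / (1 - \<alpha>)) {a..b}"
proof -
  define F where "F = (\<lambda>\<xi>. - ((x - \<xi>) powr (1 - \<alpha>)) / (1 - \<alpha>))"
  have "((\<lambda>\<xi>. (x - \<xi>) powr (-\<alpha>)) has_integral (F b - F a)) {a..b}"
  proof (rule fundamental_theorem_of_calculus_interior[OF assms(2)])
    show "continuous_on {a..b} F"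
      unfolding F_def using assms by (intro continuous_intros continuous_on_powr') auto
    fix \<xi> assume "\<xi> \<in> {a<..<b}"
    then have pos: "0 < x - \<xi>" using assms by auto
    have "((\<lambda>\<xi>. (x - \<xi>) powr (1 - \<alpha>)) has_real_derivative (1 - \<alpha>) * (x - \<xi>) powr (1 - \<alpha> - 1) * (-1)) (at \<xi>)"
      using pos by (intro DERIV_fun_powr[of "\<lambda>\<xi>. x - \<xi>", simplified]) (auto intro!: derivative_eq_intros)
    then have "(F has_real_derivative (x - \<xi>) powr (-\<alpha>)) (at \<xi>)"
      unfolding F_def using assms pos by (auto intro!: derivative_eq_intros)
    then show "(F has_vector_derivative (x - \<xi>) powr (-\<alpha>)) (at \<xi>)"
      by (simp add: has_real_derivative_iff_has_vector_derivative)
  qed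
  then show ?thesis unfolding F_def by (simp add: diff_divide_distrib)
qed

lemma kernel_mult_integrable:
  fixes a b x \<alpha> :: real
  assumes "\<alpha> < 1" "b \<le> x" "continuous_on {a..b} f"
  shows "(\<lambda>\<xi>. (x - \<xi>) powr (-\<alpha>) * f \<xi>) integrable_on {a..b}"
proof (cases "a \<le> b")
  case True
  have "(\<lambda>\<xi>. (x - \<xi>) powr (-\<alpha>)) absolutely_integrable_on {a..b}"
    using kernel_has_integral[OF assms(1) True assms(2)]
    by (intro nonnegative_absolutely_integrable_1) auto
  then have "(\<lambda>\<xi>. f \<xi> * (x - \<xi>) powr (-\<alpha>)) absolutely_integrable_on {a..b}"
    using assms(3)
    by (intro absolutely_integrable_bounded_measurable_product_real continuous_imp_measurable_on_sets_lebesgue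
          compact_imp_bounded compact_continuous_image) auto
  then show ?thesis unfolding absolutely_integrable_on_def by (simp add: mult.commute)
qed (simp add: integrable_on_empty)

definition cell_integral :: "real \<Rightarrow> real \<Rightarrow> nat \<Rightarrow> real poly \<Rightarrow> real" where
  "cell_integral \<alpha> x J p = integral {real J - 1 .. real J} (\<lambda>\<xi>. (x - \<xi>) powr (-\<alpha>) * poly (pderiv p) \<xi>)"

lemma Dki_eq_cell_integrals:
  "Dki \<alpha> k i n v = (1 / Gamma (1 - \<alpha>)) * (\<Sum>J=1..n. cell_integral \<alpha> (real n) J (piece k i n J v))"
  unfolding Dki_def cell_integral_def ..

lemma cell_integral_const [simp]: "degree p = 0 \<Longrightarrow> cell_integral \<alpha> x J p = 0"
  unfolding cell_integral_def by (simp add: pderiv_eq_0_iff[symmetric])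

lemma cell_integral_sum:
  assumes "\<alpha> < 1" "real J \<le> x" "finite S"
  shows "cell_integral \<alpha> x J (\<Sum>j\<in>S. p j) = (\<Sum>j\<in>S. cell_integral \<alpha> x J (p j))"
  unfolding cell_integral_def higher_pderiv_sum[where n = 1, simplified] poly_sum sum_distrib_left
  using assms by (intro integral_sum kernel_mult_integrable) (auto intro: continuous_on_poly[OF continuous_on_id])

lemma cell_integral_shift:
  "cell_integral \<alpha> (x + real s) (J + s) (pcompose p [:- real s, 1:]) = cell_integral \<alpha> x J p"
proof -
  have "cell_integral \<alpha> (x + real s) (J + s) (pcompose p [:- real s, 1:]) =
      integral {real J - 1 + real s .. real J + real s}
        (\<lambda>\<xi>. (x + real s - \<xi>) powr (-\<alpha>) * poly (pderiv p) (\<xi> - real s))"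
    unfolding cell_integral_def pderiv_pcompose by (simp add: poly_pcompose pderiv_pCons algebra_simps)
  also have "\<dots> = integral {(real J - 1 + real s) - real s .. (real J + real s) - real s}
        (\<lambda>\<xi>. (x + real s - (\<xi> + real s)) powr (-\<alpha>) * poly (pderiv p) (\<xi> + real s - real s))"
    by (rule integral_shift_real_ivl[symmetric])
  also have "\<dots> = cell_integral \<alpha> x J p"
    unfolding cell_integral_def by simp
  finally show ?thesis .
qed

definition node_delta :: "nat \<Rightarrow> int \<Rightarrow> real" where
  "node_delta j = (\<lambda>l. if l = int j then 1 else 0)"

definition node_step :: "nat \<Rightarrow> int \<Rightarrow> real" where
  "node_step k = (\<lambda>l. if int k \<le> l then 1 else 0)"

lemma omega_eq_Dki: "omega \<alpha> k i m = Dki \<alpha> k i (k + m) (node_delta k)"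
  unfolding omega_def node_delta_def ..

lemma Dki_sum:
  assumes "\<alpha> < 1" "1 \<le> k" "finite S"
  shows "Dki \<alpha> k i n (\<lambda>l. \<Sum>j\<in>S. w j l) = (\<Sum>j\<in>S. Dki \<alpha> k i n (w j))"
proof -
  have "(\<Sum>J=1..n. cell_integral \<alpha> (real n) J (piece k i n J (\<lambda>l. \<Sum>j\<in>S. w j l))) =
        (\<Sum>J=1..n. \<Sum>j\<in>S. cell_integral \<alpha> (real n) J (piece k i n J (w j)))"
    unfolding piece_sum[OF assms(2,3)] using assms(1,3) by (intro sum.cong refl cell_integral_sum) auto
  also have "\<dots> = (\<Sum>j\<in>S. \<Sum>J=1..n. cell_integral \<alpha> (real n) J (piece k i n J (w j)))"
    by (rule sum.swap)
  finally show ?thesis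
    unfolding Dki_eq_cell_integrals by (simp add: sum_distrib_left)
qed

lemma Dki_cong:
  assumes "1 \<le> i" "i \<le> k" "k \<le> n" "\<And>l. l \<le> int n \<Longrightarrow> v l = w l"
  shows "Dki \<alpha> k i n v = Dki \<alpha> k i n w"
proof -
  have "piece k i n J v = piece k i n J w" if "J \<in> {1..n}" for J
    using that assms piece_nodes_bounds(3)[of i k J n] by (intro piece_cong) fastforce+
  then show ?thesis unfolding Dki_eq_cell_integrals by simp
qed

text \<open>The first s cells only see nodes below t_{k+s}, where v vanishes; the other cells are
  translates of those for n.\<close>
lemma Dki_shift:
  assumes "1 \<le> i" "i \<le> k" and vanish: "\<And>l. l < int (k + s) \<Longrightarrow> v l = 0"
  shows "Dki \<alpha> k i (n + s) v = Dki \<alpha> k i n (\<lambda>l. v (l + int s))"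
proof -
  have k: "1 \<le> k" using assms by simp
  have low_zero: "piece k i (n + s) J v = [:0:]" if "J \<le> s" "J \<le> n + s" for J
    using that assms piece_nodes_bounds(2)[of i k J "n + s"] by (intro piece_const[OF k]) fastforce
  have cell_eq: "cell_integral \<alpha> (real (n + s)) (J + s) (piece k i (n + s) (J + s) v) =
      cell_integral \<alpha> (real n) J (piece k i n J (\<lambda>l. v (l + int s)))" if J: "J \<in> {1..n}" for J
  proof (cases "int k - int i < int J")
    case True
    then show ?thesis
      using cell_integral_shift[of \<alpha> "real n" s J] by (simp add: piece_shift[OF k True])
  next
    case False
    have "piece k i n J (\<lambda>l. v (l + int s)) = [:0:]"
      using False J assms piece_nodes_bounds(2)[of i k J n] by (intro piece_const[OF k]) fastforce
    moreover have "piece k i (n + s) (J + s) v = [:0:]"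
      using False J assms piece_nodes_bounds(2)[of i k "J + s" "n + s"] by (intro piece_const[OF k]) fastforce
    ultimately show ?thesis by simp
  qed
  have "(\<Sum>J=1..s+n. cell_integral \<alpha> (real (n + s)) J (piece k i (n + s) J v)) =
      (\<Sum>J=1..s. cell_integral \<alpha> (real (n + s)) J (piece k i (n + s) J v)) +
      (\<Sum>J=1+s..n+s. cell_integral \<alpha> (real (n + s)) J (piece k i (n + s) J v))"
    by (subst sum.ub_add_nat) (simp_all add: add.commute)
  also have "\<dots> = (\<Sum>J=1..n. cell_integral \<alpha> (real (n + s)) (J + s) (piece k i (n + s) (J + s) v))"
    using low_zero by (simp only: sum.shift_bounds_cl_nat_ivl) simp
  also have "\<dots> = (\<Sum>J=1..n. cell_integral \<alpha> (real n) J (piece k i n J (\<lambda>l. v (l + int s))))"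
    using cell_eq by simp
  finally show ?thesis unfolding Dki_eq_cell_integrals by (simp add: add.commute)
qed

lemma Dki_node_delta:
  assumes "1 \<le> i" "i \<le> k" "k \<le> j" "j \<le> n"
  shows "Dki \<alpha> k i n (node_delta j) = omega \<alpha> k i (n - j)"
proof -
  have "Dki \<alpha> k i ((k + (n - j)) + (j - k)) (node_delta j) =
        Dki \<alpha> k i (k + (n - j)) (\<lambda>l. node_delta j (l + int (j - k)))"
    using assms by (intro Dki_shift) (auto simp: node_delta_def)
  moreover have "(\<lambda>l. node_delta j (l + int (j - k))) = node_delta k"
    using assms by (auto simp: node_delta_def)
  ultimately show ?thesis using assms by (simp add: omega_eq_Dki)
qed

lemma sum_node_delta:
  "(\<Sum>j=k..n. node_delta j l) = (if int k \<le> l \<and> l \<le> int n then 1 else 0)"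
proof (cases "int k \<le> l \<and> l \<le> int n")
  case True
  then have "(\<Sum>j=k..n. node_delta j l) = (\<Sum>j=k..n. if j = nat l then 1 else 0)"
    unfolding node_delta_def by (intro sum.cong) auto
  with True show ?thesis by auto
next
  case False
  then show ?thesis unfolding node_delta_def by (auto intro!: sum.neutral)
qed

lemma phi_eq_Dki_step:
  assumes "\<alpha> < 1" "1 \<le> i" "i \<le> k"
  shows "phi \<alpha> k i N = Dki \<alpha> k i (k + N) (node_step k)"
proof -
  have "phi \<alpha> k i N = (\<Sum>m=0..N. Dki \<alpha> k i (k + N) (node_delta (k + N - m)))"
    unfolding phi_def using assms by (intro sum.cong) (auto simp: Dki_node_delta)
  also have "\<dots> = (\<Sum>j=k..k+N. Dki \<alpha> k i (k + N) (node_delta j))"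
    by (rule sum.reindex_bij_witness[where i="\<lambda>j. k + N - j" and j="\<lambda>m. k + N - m"]) auto
  also have "\<dots> = Dki \<alpha> k i (k + N) (\<lambda>l. \<Sum>j=k..k+N. node_delta j l)"
    using assms by (intro Dki_sum[symmetric]) auto
  also have "\<dots> = Dki \<alpha> k i (k + N) (node_step k)"
    using assms by (intro Dki_cong) (auto simp: sum_node_delta node_step_def)
  finally show ?thesis .
qed

lemma Dki_eventually_const:
  assumes "1 \<le> i" "i \<le> k" "3 * k \<le> n" and const: "\<And>l. int k \<le> l \<Longrightarrow> v l = v (int k)"
  shows "Dki \<alpha> k i n v =
    (1 / Gamma (1 - \<alpha>)) * (\<Sum>J=1..2*k. cell_integral \<alpha> (real n) J (piece k i (3 * k) J v))"
proof -
  have k: "1 \<le> k" using assms by simp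
  have high_const: "piece k i n J v = [:v (int k):]" if "2 * k < J" "J \<le> n" for J
    using that assms(1-3) piece_nodes_bounds(1)[of i k J n] by (intro piece_const[OF k] const) fastforce
  have low_indep: "piece k i n J v = piece k i (3 * k) J v" if "J \<le> 2 * k" for J
    using that assms(1-3) unfolding piece_eq_interp[OF k] piece_start_def by simp
  have "(\<Sum>J=1..2*k+(n-2*k). cell_integral \<alpha> (real n) J (piece k i n J v)) =
      (\<Sum>J=1..2*k. cell_integral \<alpha> (real n) J (piece k i n J v)) +
      (\<Sum>J=2*k+1..2*k+(n-2*k). cell_integral \<alpha> (real n) J (piece k i n J v))"
    by (rule sum.ub_add_nat) simp
  also have "\<dots> = (\<Sum>J=1..2*k. cell_integral \<alpha> (real n) J (piece k i (3 * k) J v))"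
    using assms(1-3) by (simp add: high_const low_indep)
  finally show ?thesis
    unfolding Dki_eq_cell_integrals using assms(3) by simp
qed

section \<open>Asymptotics of \<phi>\<close>

lemma integral_poly_pderiv:
  fixes a b :: real
  assumes "a \<le> b"
  shows "integral {a..b} (poly (pderiv p)) = poly p b - poly p a"
proof (rule integral_unique, rule fundamental_theorem_of_calculus[OF assms])
  show "\<And>x. x \<in> {a..b} \<Longrightarrow> (poly p has_vector_derivative poly (pderiv p) x) (at x within {a..b})"
    by (auto simp: has_real_derivative_iff_has_vector_derivative[symmetric] intro: DERIV_subset[OF poly_DERIV])
qed

lemma powr_diff_mvt:
  fixes a b s :: real
  assumes "0 < a" "a < b"
  shows "\<exists>z. a < z \<and> z < b \<and> a powr (-s) - b powr (-s) = s * (b - a) * z powr (-s - 1)"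
proof -
  have "\<exists>z. a < z \<and> z < b \<and> b powr (-s) - a powr (-s) = (b - a) * ((-s) * z powr (-s - 1))"
  proof (rule MVT2[OF assms(2)])
    show "DERIV (\<lambda>y. y powr (-s)) y :> (-s) * y powr (-s - 1)" if "a \<le> y" for y
      using that assms by (intro has_real_derivative_powr) auto
  qed
  then show ?thesis by (auto simp: algebra_simps)
qed

lemma powr_diff_le:
  fixes a b s :: real
  assumes "0 < a" "a \<le> b" "0 \<le> s"
  shows "a powr (-s) - b powr (-s) \<le> s * (b - a) * a powr (-s - 1)"
proof (cases "a = b")
  case False
  then obtain z where z: "a < z" "z < b" "a powr (-s) - b powr (-s) = s * (b - a) * z powr (-s - 1)"
    using assms powr_diff_mvt[of a b s] by auto
  have "z powr (-s - 1) \<le> a powr (-s - 1)"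
    using z assms by (intro powr_mono2') auto
  then show ?thesis
    unfolding z(3) using z assms by (intro mult_left_mono) auto
qed simp

lemma powr_diff_ge:
  fixes a b s :: real
  assumes "0 < a" "a \<le> b" "0 \<le> s"
  shows "s * (b - a) * b powr (-s - 1) \<le> a powr (-s) - b powr (-s)"
proof (cases "a = b")
  case False
  then obtain z where z: "a < z" "z < b" "a powr (-s) - b powr (-s) = s * (b - a) * z powr (-s - 1)"
    using assms powr_diff_mvt[of a b s] by auto
  have "b powr (-s - 1) \<le> z powr (-s - 1)"
    using z assms by (intro powr_mono2') auto
  then show ?thesis
    unfolding z(3) using z assms by (intro mult_left_mono) auto
qed simp

lemma kernel_diff_bound:
  fixes x \<xi> b \<alpha> :: real
  assumes "0 \<le> \<alpha>" "0 \<le> \<xi>" "\<xi> \<le> b" "b < x"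
  shows "\<bar>(x - \<xi>) powr (-\<alpha>) - x powr (-\<alpha>)\<bar> \<le> \<alpha> * b * (x - b) powr (-\<alpha> - 1)"
proof -
  have "x powr (-\<alpha>) \<le> (x - \<xi>) powr (-\<alpha>)"
    using assms by (intro powr_mono2') auto
  moreover have "(x - \<xi>) powr (-\<alpha>) - x powr (-\<alpha>) \<le> \<alpha> * \<xi> * (x - \<xi>) powr (-\<alpha> - 1)"
    using powr_diff_le[of "x - \<xi>" x \<alpha>] assms by simp
  moreover have "(x - \<xi>) powr (-\<alpha> - 1) \<le> (x - b) powr (-\<alpha> - 1)"
    using assms by (intro powr_mono2') auto
  then have "\<alpha> * \<xi> * (x - \<xi>) powr (-\<alpha> - 1) \<le> \<alpha> * b * (x - b) powr (-\<alpha> - 1)"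
    using assms by (intro mult_mono mult_left_mono) auto
  ultimately show ?thesis by linarith
qed

lemma kernel_integral_asymp:
  fixes a b \<alpha> :: real and f :: "real \<Rightarrow> real"
  assumes "0 \<le> \<alpha>" "0 \<le> a" "a \<le> b" "continuous_on {a..b} f"
  shows "(\<lambda>x. integral {a..b} (\<lambda>\<xi>. (x - \<xi>) powr (-\<alpha>) * f \<xi>) - x powr (-\<alpha>) * integral {a..b} f)
           \<in> O(\<lambda>x. x powr (-\<alpha> - 1))"
proof -
  obtain B where B: "\<And>\<xi>. \<xi> \<in> {a..b} \<Longrightarrow> \<bar>f \<xi>\<bar> \<le> B"
    using compact_imp_bounded[OF compact_continuous_image[OF assms(4)]]
    unfolding bounded_iff by (auto simp del: atLeastAtMost_iff)
  have bound: "\<bar>integral {a..b} (\<lambda>\<xi>. (x - \<xi>) powr (-\<alpha>) * f \<xi>) - x powr (-\<alpha>) * integral {a..b} f\<bar>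
      \<le> \<alpha> * b * B * (b - a) * (x - b) powr (-\<alpha> - 1)" if x: "b < x" for x
  proof -
    have "integral {a..b} (\<lambda>\<xi>. (x - \<xi>) powr (-\<alpha>) * f \<xi>) - x powr (-\<alpha>) * integral {a..b} f
        = integral {a..b} (\<lambda>\<xi>. ((x - \<xi>) powr (-\<alpha>) - x powr (-\<alpha>)) * f \<xi>)"
    proof -
      have "(\<lambda>\<xi>. (x - \<xi>) powr (-\<alpha>) * f \<xi>) integrable_on {a..b}"
        using x assms(4) by (intro integrable_continuous_interval continuous_intros) auto
      moreover have "(\<lambda>\<xi>. x powr (-\<alpha>) * f \<xi>) integrable_on {a..b}"
        using assms(4) by (intro integrable_continuous_interval continuous_intros)
      ultimately show ?thesis by (simp add: left_diff_distrib integral_diff)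
    qed
    also have "\<bar>\<dots>\<bar> \<le> (\<alpha> * b * (x - b) powr (-\<alpha> - 1) * B) * (b - a)"
    proof (subst real_norm_def[symmetric], rule integral_bound[OF assms(3)])
      show "continuous_on {a..b} (\<lambda>\<xi>. ((x - \<xi>) powr (-\<alpha>) - x powr (-\<alpha>)) * f \<xi>)"
        using x assms(4) by (intro continuous_intros) auto
      fix \<xi> assume \<xi>: "\<xi> \<in> {a..b}"
      have "\<bar>(x - \<xi>) powr (-\<alpha>) - x powr (-\<alpha>)\<bar> \<le> \<alpha> * b * (x - b) powr (-\<alpha> - 1)"
        using \<xi> x assms by (intro kernel_diff_bound) auto
      then show "norm (((x - \<xi>) powr (-\<alpha>) - x powr (-\<alpha>)) * f \<xi>) \<le> \<alpha> * b * (x - b) powr (-\<alpha> - 1) * B"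
        unfolding real_norm_def abs_mult using B[OF \<xi>] by (intro mult_mono) auto
    qed
    finally show ?thesis by (simp add: mult_ac)
  qed
  have "(\<lambda>x. integral {a..b} (\<lambda>\<xi>. (x - \<xi>) powr (-\<alpha>) * f \<xi>) - x powr (-\<alpha>) * integral {a..b} f)
      \<in> O(\<lambda>x. (x - b) powr (-\<alpha> - 1))"
    by (intro bigoI[of _ "\<alpha> * b * B * (b - a)"] eventually_mono[OF eventually_gt_at_top[of b]]) (simp add: bound)
  also have "(\<lambda>x. (x - b) powr (-\<alpha> - 1)) \<in> O(\<lambda>x. x powr (-\<alpha> - 1))"
    by real_asymp
  finally show ?thesis .
qed

text \<open>The interpolant of the nodal values is continuous, so these integrals telescope to the
  total jump of the step.\<close>
lemma step_pieces_moment: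
  assumes "1 \<le> i" "i \<le> k"
  shows "(\<Sum>J=1..2*k. integral {real J - 1..real J} (poly (pderiv (piece k i (3 * k) J (node_step k))))) = 1"
proof -
  have telescope: "(\<Sum>J=1..n. g (int J) - g (int J - 1)) = g (int n) - g 0" for n and g :: "int \<Rightarrow> real"
    by (induction n) simp_all
  have "integral {real J - 1..real J} (poly (pderiv (piece k i (3 * k) J (node_step k)))) =
      node_step k (int J) - node_step k (int J - 1)" if "J \<in> {1..2*k}" for J
  proof -
    have k: "1 \<le> k" using assms by simp
    have "int J - 1 \<in> piece_nodes k i (3 * k) J" "int J \<in> piece_nodes k i (3 * k) J"
      using that assms by (intro piece_nodes_cell_ends; simp)+
    then show ?thesis
      using poly_piece_node[OF k, of "int J - 1"] poly_piece_node[OF k, of "int J"]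
      by (simp add: integral_poly_pderiv)
  qed
  then have "(\<Sum>J=1..2*k. integral {real J - 1..real J} (poly (pderiv (piece k i (3 * k) J (node_step k))))) =
      (\<Sum>J=1..2*k. node_step k (int J) - node_step k (int J - 1))"
    by (rule sum.cong[OF refl])
  also have "\<dots> = 1"
    unfolding telescope using assms by (simp add: node_step_def)
  finally show ?thesis .
qed

lemma phi_eq_cell_integrals:
  assumes "\<alpha> < 1" "1 \<le> i" "i \<le> k" "2 * k \<le> N"
  shows "phi \<alpha> k i N = rGamma (1 - \<alpha>) *
    (\<Sum>J=1..2*k. cell_integral \<alpha> (real (k + N)) J (piece k i (3 * k) J (node_step k)))"
proof -
  have "Dki \<alpha> k i (k + N) (node_step k) = (1 / Gamma (1 - \<alpha>)) *
      (\<Sum>J=1..2*k. cell_integral \<alpha> (real (k + N)) J (piece k i (3 * k) J (node_step k)))"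
    using assms by (intro Dki_eventually_const) (auto simp: node_step_def)
  then show ?thesis
    using phi_eq_Dki_step[OF assms(1-3)] by (simp add: rGamma_inverse_Gamma divide_inverse)
qed

lemma step_cell_integrals_asymp:
  assumes "0 < \<alpha>" "1 \<le> i" "i \<le> k"
  shows "(\<lambda>x. (\<Sum>J=1..2*k. cell_integral \<alpha> x J (piece k i (3 * k) J (node_step k))) - x powr (-\<alpha>))
           \<in> O(\<lambda>x. x powr (-\<alpha> - 1))"
proof -
  define q where "q J = piece k i (3 * k) J (node_step k)" for J
  have "(\<lambda>x. \<Sum>J=1..2*k. cell_integral \<alpha> x J (q J) -
      x powr (-\<alpha>) * integral {real J - 1..real J} (poly (pderiv (q J)))) \<in> O(\<lambda>x. x powr (-\<alpha> - 1))"
    unfolding cell_integral_def using assms(1)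
    by (intro big_sum_in_bigo kernel_integral_asymp) (auto intro: continuous_on_poly[OF continuous_on_id])
  also have "(\<lambda>x. \<Sum>J=1..2*k. cell_integral \<alpha> x J (q J) -
      x powr (-\<alpha>) * integral {real J - 1..real J} (poly (pderiv (q J)))) =
      (\<lambda>x. (\<Sum>J=1..2*k. cell_integral \<alpha> x J (q J)) - x powr (-\<alpha>))"
    using step_pieces_moment[OF assms(2,3)]
    unfolding q_def by (simp add: sum_subtractf sum_distrib_left[symmetric])
  finally show ?thesis unfolding q_def .
qed

lemma phi_asymp:
  assumes "0 < \<alpha>" "\<alpha> < 1" "1 \<le> i" "i \<le> k"
  shows "(\<lambda>N. phi \<alpha> k i N - rGamma (1 - \<alpha>) * real N powr (-\<alpha>)) \<in> O(\<lambda>N. real N powr (-\<alpha> - 1))"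
proof -
  define S where "S x = (\<Sum>J=1..2*k. cell_integral \<alpha> x J (piece k i (3 * k) J (node_step k)))" for x
  have "(\<lambda>N. S (real (k + N)) - real (k + N) powr (-\<alpha>)) \<in> O(\<lambda>N. real (k + N) powr (-\<alpha> - 1))"
    using step_cell_integrals_asymp[OF assms(1,3,4)] unfolding S_def[abs_def]
    by (rule landau_o.big.compose) real_asymp
  also have "(\<lambda>N. real (k + N) powr (-\<alpha> - 1)) \<in> O(\<lambda>N. real N powr (-\<alpha> - 1))"
    by real_asymp
  finally have cells: "(\<lambda>N. S (real (k + N)) - real (k + N) powr (-\<alpha>)) \<in> O(\<lambda>N. real N powr (-\<alpha> - 1))" .
  have shift: "(\<lambda>N. real (k + N) powr (-\<alpha>) - real N powr (-\<alpha>)) \<in> O(\<lambda>N. real N powr (-\<alpha> - 1))"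
    by real_asymp
  have "(\<lambda>N. rGamma (1 - \<alpha>) * (S (real (k + N)) - real (k + N) powr (-\<alpha>)) +
      rGamma (1 - \<alpha>) * (real (k + N) powr (-\<alpha>) - real N powr (-\<alpha>))) \<in> O(\<lambda>N. real N powr (-\<alpha> - 1))"
    by (intro sum_in_bigo) (simp_all only: cmult_in_bigo_iff cells shift simp_thms)
  moreover have "\<forall>\<^sub>F N in sequentially. rGamma (1 - \<alpha>) * (S (real (k + N)) - real (k + N) powr (-\<alpha>)) +
      rGamma (1 - \<alpha>) * (real (k + N) powr (-\<alpha>) - real N powr (-\<alpha>)) =
      phi \<alpha> k i N - rGamma (1 - \<alpha>) * real N powr (-\<alpha>)"
    using eventually_ge_at_top[of "2 * k"]
    by eventually_elim (simp only: phi_eq_cell_integrals[OF assms(2-4)] S_def, simp add: algebra_simps)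
  ultimately show ?thesis by (simp add: landau_o.big.in_cong)
qed

section \<open>Asymptotics of the binomial coefficients\<close>

lemma rGamma_series_Suc:
  fixes z :: real
  assumes "1 \<le> n"
  shows "rGamma_series z (Suc n) =
    rGamma_series z n * ((z + real n + 1) / (real n + 1) * (real n / (real n + 1)) powr z)"
proof -
  have alt: "rGamma_series z m = pochhammer z (Suc m) / (fact m * real m powr z)" if "1 \<le> m" for m
    using that by (simp add: rGamma_series_def powr_def)
  have "0 < real n powr z" using assms by simp
  then have "rGamma_series z n * ((z + real n + 1) / (real n + 1) * (real n / (real n + 1)) powr z) =
      pochhammer z (Suc n) * (z + real n + 1) / (fact n * (real n + 1) * (real n + 1) powr z)"
    unfolding alt[OF assms] powr_divide
    by (simp add: divide_simps)
  also have "\<dots> = rGamma_series z (Suc n)"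
    using alt[of "Suc n"] by (simp add: pochhammer_Suc algebra_simps)
  finally show ?thesis ..
qed

lemma rGamma_series_increment_bigo:
  fixes z :: real
  shows "(\<lambda>n. rGamma_series z (Suc n) - rGamma_series z n) \<in> O(\<lambda>n. real n powr (-2))"
proof -
  have "rGamma_series z \<in> O(\<lambda>_. 1)"
    using rGamma_series_LIMSEQ[of z] by (intro bigoI_tendsto[where c = "rGamma z"]) simp_all
  moreover have "(\<lambda>n. (z + real n + 1) / (real n + 1) * (real n / (real n + 1)) powr z - 1)
      \<in> O(\<lambda>n. real n powr (-2))"
    by real_asymp
  ultimately have "(\<lambda>n. rGamma_series z n * ((z + real n + 1) / (real n + 1) * (real n / (real n + 1)) powr z - 1))
      \<in> O(\<lambda>n. 1 * real n powr (-2))"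
    by (rule landau_o.big.mult)
  moreover have "\<forall>\<^sub>F n in sequentially.
      rGamma_series z n * ((z + real n + 1) / (real n + 1) * (real n / (real n + 1)) powr z - 1) =
      rGamma_series z (Suc n) - rGamma_series z n"
    using eventually_ge_at_top[of 1] by eventually_elim (simp add: rGamma_series_Suc algebra_simps)
  ultimately show ?thesis by (simp add: landau_o.big.in_cong)
qed

text \<open>Compare the terms with the telescoping differences of (m - 1) powr -s.\<close>
lemma tail_sum_le_powr:
  fixes f :: "nat \<Rightarrow> real" and s C :: real
  assumes "0 < s" "0 \<le> C" "2 \<le> n" and f: "\<And>m. n \<le> m \<Longrightarrow> \<bar>f m\<bar> \<le> C * real m powr (-s - 1)"
  shows "\<bar>\<Sum>j. f (j + n)\<bar> \<le> C / s * (real n - 1) powr (-s)"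
proof -
  define t where "t j = (real (j + n) - 1) powr (-s)" for j
  have "t \<longlonglongrightarrow> 0"
    unfolding t_def using assms(1) by real_asymp
  then have tele: "(\<lambda>j. C / s * (t j - t (Suc j))) sums (C / s * (real n - 1) powr (-s))"
    using telescope_sums'[of t 0] unfolding t_def by (intro sums_mult) simp
  have term_le: "\<bar>f (j + n)\<bar> \<le> C / s * (t j - t (Suc j))" for j
  proof -
    have "s * (real (j + n) - (real (j + n) - 1)) * real (j + n) powr (-s - 1) \<le>
        (real (j + n) - 1) powr (-s) - real (j + n) powr (-s)"
      using assms by (intro powr_diff_ge) auto
    then have "C / s * (s * real (j + n) powr (-s - 1)) \<le> C / s * (t j - t (Suc j))"
      unfolding t_def using assms by (intro mult_left_mono) auto
    then show ?thesis using f[of "j + n"] assms(1) by simp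
  qed
  have summable: "summable (\<lambda>j. \<bar>f (j + n)\<bar>)"
    by (rule summable_comparison_test'[OF sums_summable[OF tele]]) (use term_le in simp)
  then have "\<bar>\<Sum>j. f (j + n)\<bar> \<le> (\<Sum>j. \<bar>f (j + n)\<bar>)"
    by (rule summable_rabs)
  also have "\<dots> \<le> (\<Sum>j. C / s * (t j - t (Suc j)))"
    by (intro suminf_le term_le summable sums_summable[OF tele])
  also have "\<dots> = C / s * (real n - 1) powr (-s)"
    using tele by (simp add: sums_iff)
  finally show ?thesis .
qed

lemma tail_sum_bigo:
  fixes f :: "nat \<Rightarrow> real" and s :: real
  assumes "f \<in> O(\<lambda>n. real n powr (-s - 1))" "0 < s"
  shows "(\<lambda>n. \<Sum>j. f (j + n)) \<in> O(\<lambda>n. real n powr (-s))"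
proof -
  obtain C where "0 < C" and "\<forall>\<^sub>F n in sequentially. norm (f n) \<le> C * norm (real n powr (-s - 1))"
    using assms(1) by (elim landau_o.bigE)
  then obtain N0 where N0: "\<And>n. N0 \<le> n \<Longrightarrow> \<bar>f n\<bar> \<le> C * real n powr (-s - 1)"
    by (auto simp: eventually_at_top_linorder)
  have "\<bar>\<Sum>j. f (j + n)\<bar> \<le> C / s * (real n - 1) powr (-s)" if "max N0 2 \<le> n" for n
    using that \<open>0 < C\<close> assms(2) by (intro tail_sum_le_powr N0) auto
  then have "(\<lambda>n. \<Sum>j. f (j + n)) \<in> O(\<lambda>n. (real n - 1) powr (-s))"
    by (intro bigoI[of _ "C / s"] eventually_mono[OF eventually_ge_at_top[of "max N0 2"]]) simp
  also have "(\<lambda>n. (real n - 1) powr (-s)) \<in> O(\<lambda>n. real n powr (-s))"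
    by real_asymp
  finally show ?thesis .
qed

lemma rGamma_series_minus_rGamma_bigo:
  fixes z :: real
  shows "(\<lambda>n. rGamma_series z n - rGamma z) \<in> O(\<lambda>n. real n powr (-1))"
proof -
  have "(\<lambda>n. \<Sum>j. rGamma_series z (Suc (j + n)) - rGamma_series z (j + n)) \<in> O(\<lambda>n. real n powr (-1))"
    using tail_sum_bigo[of "\<lambda>n. rGamma_series z (Suc n) - rGamma_series z n" 1]
    by (simp add: rGamma_series_increment_bigo)
  moreover have "(\<Sum>j. rGamma_series z (Suc (j + n)) - rGamma_series z (j + n)) = rGamma z - rGamma_series z n" for n
    using telescope_sums[OF LIMSEQ_ignore_initial_segment[OF rGamma_series_LIMSEQ, of z n]]
    by (simp add: sums_iff)
  ultimately have "(\<lambda>n. rGamma z - rGamma_series z n) \<in> O(\<lambda>n. real n powr (-1))"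
    by simp
  then show ?thesis
    using landau_o.big.uminus_in_iff[of "\<lambda>n. rGamma_series z n - rGamma z"] by simp
qed

lemma gcoef_rGamma_series:
  assumes "1 \<le> n"
  shows "gcoef \<beta> n * (real n - \<beta>) = rGamma_series (-\<beta>) n * real n powr (-\<beta>)"
  using assms unfolding gcoef_def gbinomial_pochhammer rGamma_series_def
  by (simp add: powr_def pochhammer_Suc field_simps)

lemma gcoef_asymp:
  "(\<lambda>n. gcoef \<beta> n - rGamma (-\<beta>) * real n powr (-\<beta> - 1)) \<in> O(\<lambda>n. real n powr (-\<beta> - 2))"
proof -
  define h where "h n = real n powr (-\<beta>) / (real n - \<beta>)" for n :: nat
  have "(\<lambda>n. (rGamma_series (-\<beta>) n - rGamma (-\<beta>)) * h n) \<in> O(\<lambda>n. real n powr (-1) * real n powr (-\<beta> - 1))"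
    unfolding h_def by (intro landau_o.big.mult rGamma_series_minus_rGamma_bigo) real_asymp
  also have "(\<lambda>n. real n powr (-1) * real n powr (-\<beta> - 1)) \<in> O(\<lambda>n. real n powr (-\<beta> - 2))"
    by real_asymp
  finally have series: "(\<lambda>n. (rGamma_series (-\<beta>) n - rGamma (-\<beta>)) * h n) \<in> O(\<lambda>n. real n powr (-\<beta> - 2))" .
  have limit: "(\<lambda>n. h n - real n powr (-\<beta> - 1)) \<in> O(\<lambda>n. real n powr (-\<beta> - 2))"
    unfolding h_def by real_asymp
  have "(\<lambda>n. (rGamma_series (-\<beta>) n - rGamma (-\<beta>)) * h n + rGamma (-\<beta>) * (h n - real n powr (-\<beta> - 1)))
      \<in> O(\<lambda>n. real n powr (-\<beta> - 2))"
    by (intro sum_in_bigo) (simp_all only: cmult_in_bigo_iff series limit simp_thms)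
  moreover have "\<forall>\<^sub>F n in sequentially.
      (rGamma_series (-\<beta>) n - rGamma (-\<beta>)) * h n + rGamma (-\<beta>) * (h n - real n powr (-\<beta> - 1)) =
      gcoef \<beta> n - rGamma (-\<beta>) * real n powr (-\<beta> - 1)"
  proof (rule eventually_mono[OF eventually_ge_at_top[of "nat \<lceil>\<beta>\<rceil> + 1"]])
    fix n assume n: "nat \<lceil>\<beta>\<rceil> + 1 \<le> n"
    then have "\<beta> < real n" "1 \<le> n" by linarith+
    then have "gcoef \<beta> n = rGamma_series (-\<beta>) n * h n"
      using gcoef_rGamma_series[of n \<beta>] unfolding h_def by (simp add: field_simps)
    then show "(rGamma_series (-\<beta>) n - rGamma (-\<beta>)) * h n + rGamma (-\<beta>) * (h n - real n powr (-\<beta> - 1)) =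
        gcoef \<beta> n - rGamma (-\<beta>) * real n powr (-\<beta> - 1)"
      by (simp add: algebra_simps)
  qed
  ultimately show ?thesis by (simp add: landau_o.big.in_cong)
qed

lemma gcoef_bigo: "gcoef \<beta> \<in> O(\<lambda>n. real n powr (-\<beta> - 1))"
proof -
  have remainder: "(\<lambda>n. gcoef \<beta> n - rGamma (-\<beta>) * real n powr (-\<beta> - 1)) \<in> O(\<lambda>n. real n powr (-\<beta> - 1))"
    using gcoef_asymp by (rule landau_o.big_trans) real_asymp
  have "(\<lambda>n. (gcoef \<beta> n - rGamma (-\<beta>) * real n powr (-\<beta> - 1)) + rGamma (-\<beta>) * real n powr (-\<beta> - 1))
      \<in> O(\<lambda>n. real n powr (-\<beta> - 1))"
    by (rule sum_in_bigo(1)[OF remainder]) simp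
  then show ?thesis by simp
qed

lemma phi_minus_gcoef_bigo:
  assumes "0 < \<alpha>" "\<alpha> < 1" "1 \<le> i" "i \<le> k"
  shows "(\<lambda>N. phi \<alpha> k i N - gcoef (\<alpha> - 1) N) \<in> O(\<lambda>N. real N powr (-\<alpha> - 1))"
proof -
  have exponents: "- (\<alpha> - 1) = 1 - \<alpha>" "1 - \<alpha> - 1 = -\<alpha>" "1 - \<alpha> - 2 = -\<alpha> - 1"
    by simp_all
  have "(\<lambda>N. gcoef (\<alpha> - 1) N - rGamma (1 - \<alpha>) * real N powr (-\<alpha>)) \<in> O(\<lambda>N. real N powr (-\<alpha> - 1))"
    using gcoef_asymp[of "\<alpha> - 1"] unfolding exponents .
  with phi_asymp[OF assms] have "(\<lambda>N. (phi \<alpha> k i N - rGamma (1 - \<alpha>) * real N powr (-\<alpha>)) -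
      (gcoef (\<alpha> - 1) N - rGamma (1 - \<alpha>) * real N powr (-\<alpha>))) \<in> O(\<lambda>N. real N powr (-\<alpha> - 1))"
    by (rule sum_in_bigo(2))
  then show ?thesis by simp
qed

section \<open>Summability of \<psi>\<close>

lemma gcoef_convolution: "(\<Sum>m=0..n. gcoef a m * gcoef b (n - m)) = gcoef (a + b) n"
proof -
  have "gcoef a m * gcoef b (n - m) = (-1) ^ n * ((a gchoose m) * (b gchoose (n - m)))" if "m \<le> n" for m
    using that unfolding gcoef_def by (simp add: power_add[symmetric] algebra_simps)
  then have "(\<Sum>m=0..n. gcoef a m * gcoef b (n - m)) = (-1) ^ n * (\<Sum>m=0..n. (a gchoose m) * (b gchoose (n - m)))"
    by (simp add: sum_distrib_left)
  then show ?thesis by (simp add: gbinomial_Vandermonde gcoef_def)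
qed

lemma summable_norm_Cauchy_product:
  fixes a b :: "nat \<Rightarrow> 'a :: {real_normed_algebra, banach}"
  assumes "summable (\<lambda>n. norm (a n))" "summable (\<lambda>n. norm (b n))"
  shows "summable (\<lambda>n. norm (\<Sum>m\<le>n. a m * b (n - m)))"
proof (rule summable_comparison_test')
  show "summable (\<lambda>n. \<Sum>m\<le>n. norm (a m) * norm (b (n - m)))"
    using assms by (intro summable_Cauchy_product) simp_all
  show "norm (norm (\<Sum>m\<le>n. a m * b (n - m))) \<le> (\<Sum>m\<le>n. norm (a m) * norm (b (n - m)))" for n
    by (simp add: order_trans[OF norm_sum sum_mono[OF norm_mult_ineq]])
qed

text \<open>(1 - \<xi>) powr (1 - \<alpha>) inverts (1 - \<xi>) powr (\<alpha> - 1), whose coefficients are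
  gcoef (\<alpha> - 1).\<close>
lemma psi_eq_convolution:
  "psi \<alpha> k i n = (if n = 0 then 1 else 0) +
     (\<Sum>m\<le>n. (phi \<alpha> k i m - gcoef (\<alpha> - 1) m) * gcoef (1 - \<alpha>) (n - m))"
proof -
  have "(\<Sum>m=0..n. gcoef (\<alpha> - 1) m * gcoef (1 - \<alpha>) (n - m)) = (if n = 0 then 1 else 0)"
    using gcoef_convolution[of "\<alpha> - 1" "1 - \<alpha>" n] by (simp add: gcoef_def gbinomial_0_left)
  then show ?thesis
    unfolding psi_def by (simp add: atLeast0AtMost algebra_simps sum.distrib sum_subtractf)
qed

lemma summable_abs_if_bigo_powr:
  fixes f :: "nat \<Rightarrow> real"
  assumes "f \<in> O(\<lambda>n. real n powr s)" "s < -1"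
  shows "summable (\<lambda>n. \<bar>f n\<bar>)"
proof (rule summable_comparison_test_bigo)
  show "summable (\<lambda>n. norm (real n powr s))"
    using assms(2) by (simp add: summable_real_powr_iff)
  show "(\<lambda>n. \<bar>f n\<bar>) \<in> O(\<lambda>n. real n powr s)"
    using assms(1) by simp
qed

theorem lemma4p3:
  fixes \<alpha> :: real and k i :: nat
  assumes "0 < \<alpha>" "\<alpha> < 1" "1 \<le> i" "i \<le> k" "k \<le> 6"
  shows "summable (\<lambda>n. \<bar>psi \<alpha> k i n\<bar>)"
proof -
  define R where "R N = phi \<alpha> k i N - gcoef (\<alpha> - 1) N" for N
  have R: "summable (\<lambda>N. \<bar>R N\<bar>)"
    unfolding R_def by (rule summable_abs_if_bigo_powr[OF phi_minus_gcoef_bigo[OF assms(1-4)]]) (use assms(1) in simp)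
  have g: "summable (\<lambda>m. \<bar>gcoef (1 - \<alpha>) m\<bar>)"
    by (rule summable_abs_if_bigo_powr[OF gcoef_bigo]) (use assms(2) in simp)
  have impulse: "summable (\<lambda>n. if n = 0 then 1 else (0::real))"
    by (rule summable_finite[of "{0}"]) simp_all
  have "summable (\<lambda>n. \<bar>\<Sum>m\<le>n. R m * gcoef (1 - \<alpha>) (n - m)\<bar>)"
    using summable_norm_Cauchy_product[of R "gcoef (1 - \<alpha>)"] R g by simp
  then show ?thesis
  proof (rule summable_comparison_test'[OF summable_add[OF impulse]])
    fix n
    have "\<bar>psi \<alpha> k i n\<bar> \<le> \<bar>if n = 0 then 1 else 0\<bar> + \<bar>\<Sum>m\<le>n. R m * gcoef (1 - \<alpha>) (n - m)\<bar>"
      unfolding psi_eq_convolution R_def by (rule abs_triangle_ineq)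
    then show "norm \<bar>psi \<alpha> k i n\<bar> \<le> (if n = 0 then 1 else 0) + \<bar>\<Sum>m\<le>n. R m * gcoef (1 - \<alpha>) (n - m)\<bar>"
      by simp
  qed
qed

end
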